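(* Let $(\mathfrak{g},[\cdot,\cdot]_{\mathfrak{g}})$ be a Leibniz algebra, $(V;\rho^L,\rho^R)$ a representation, and $T:V\to\mathfrak{g}$ a relative Rota-Baxter operator. Then for every $n\ge1$ and every $f\in\mathrm{Hom}(\otimes^nV,\mathfrak{g})$, $\partial_Tf=(-1)^{n-1}\{T,f\}$.
   Context: A Leibniz algebra is a vector space $\mathfrak{g}$ with bilinear $[\cdot,\cdot]_{\mathfrak{g}}$ satisfying $[x,[y,z]_{\mathfrak{g}}]_{\mathfrak{g}}=[[x,y]_{\mathfrak{g}},z]_{\mathfrak{g}}+[y,[x,z]_{\mathfrak{g}}]_{\mathfrak{g}}$. A representation $(V;\rho^L,\rho^R)$: linear $\rho^L,\rho^R:\mathfrak{g}\to\mathfrak{gl}(V)$ with $\rho^L([x,y]_{\mathfrak{g}})=[\rho^L(x),\rho^L(y)]$, $\rho^R([x,y]_{\mathfrak{g}})=[\rho^L(x),\rho^R(y)]$, $\rho^R(y)\rho^L(x)=-\rho^R(y)\rho^R(x)$. A relative Rota-Baxter operator is a linear $T:V\to\mathfrak{g}$ with $[Tv_1,Tv_2]_{\mathfrak{g}}=T(\rho^L(Tv_1)v_2+\rho^R(Tv_2)v_1)$. $C^n(V,\mathfrak{g})=\mathrm{Hom}(\otimes^nV,\mathfrak{g})$, and $\partial_T:C^n\to C^{n+1}$ is $(\partial_Tf)(v_1,\dots,v_{n+1})=\sum_{i=1}^n(-1)^{i+1}[Tv_i,f(v_1,\dots,\hat v_i,\dots,v_{n+1})]_{\mathfrak{g}}-\sum_{i=1}^n(-1)^{i+1}T\rho^R(f(v_1,\dots,\hat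 v_i,\dots,v_{n+1}))v_i+(-1)^{n+1}[f(v_1,\dots,v_n),Tv_{n+1}]_{\mathfrak{g}}+(-1)^nT\rho^L(f(v_1,\dots,v_n))v_{n+1}+\sum_{1\le i<j\le n+1}(-1)^if(v_1,\dots,\hat v_i,\dots,v_{j-1},\rho^L(Tv_i)v_j+\rho^R(Tv_j)v_i,v_{j+1},\dots,v_{n+1})$. A permutation $\sigma\in\mathbb{S}_N$ is an $(i_1,\dots,i_k)$-shuffle ($i_1+\dots+i_k=N$) if it is increasing on each of the consecutive blocks of positions of sizes $i_1,\dots,i_k$; $\mathbb{S}_{(i_1,\dots,i_k)}$ is the set of these, $(-1)^\sigma$ the sign. The bracket $\{\cdot,\cdot\}$ on $\bigoplus_{n\ge1}C^n(V,\mathfrak{g})$ is defined for $g_1\in C^m$, $g_2\in C^n$ by $\{g_1,g_2\}(v_1,\dots,v_{m+n})=$ $\sum_{k=1}^m\sum_{\sigma\in\mathbb{S}_{(k-1,n)}}(-1)^{(k-1)n+1}(-1)^\sigma g_1(v_{\sigma(1)},\dots,v_{\sigma(k-1)},\rho^L(g_2(v_{\sigma(k)},\dots,v_{\sigma(k+n-1)}))v_{k+n},v_{k+n+1},\dots,v_{m+n})$ $+\sum_{k=2}^{m+1}\sum_{\sigma\in\mathbb{S}_{(k-2,n,1)},\,\sigma(k+n-2)=k+n-1}(-1)^{kn}(-1)^\sigma g_1(v_{\sigma(1)},\dots,v_{\sigma(k-2)},\rho^R(g_2(v_{\sigma(k-1)},\dots,v_{\sigma(k+n-2)}))v_{\sigma(k+n-1)},v_{k+n},\dots,v_{m+n})$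 $+\sum_{k=1}^m\sum_{\sigma\in\mathbb{S}_{(k-1,n-1)}}(-1)^{(k-1)n}(-1)^\sigma[g_2(v_{\sigma(k)},\dots,v_{\sigma(k+n-2)},v_{k+n-1}),g_1(v_{\sigma(1)},\dots,v_{\sigma(k-1)},v_{k+n},\dots,v_{m+n})]_{\mathfrak{g}}$ $+\sum_{\sigma\in\mathbb{S}_{(m,n-1)}}(-1)^{mn+1}(-1)^\sigma[g_1(v_{\sigma(1)},\dots,v_{\sigma(m)}),g_2(v_{\sigma(m+1)},\dots,v_{\sigma(m+n-1)},v_{m+n})]_{\mathfrak{g}}$ $+\sum_{k=1}^n\sum_{\sigma\in\mathbb{S}_{(k-1,m)}}(-1)^{m(k+n-1)}(-1)^\sigma g_2(v_{\sigma(1)},\dots,v_{\sigma(k-1)},\rho^L(g_1(v_{\sigma(k)},\dots,v_{\sigma(k+m-1)}))v_{k+m},v_{k+m+1},\dots,v_{m+n})$ $+\sum_{k=1}^n\sum_{\sigma\in\mathbb{S}_{(k-1,m,1)},\,\sigma(k+m-1)=k+m}(-1)^{m(k+n-1)+1}(-1)^\sigma g_2(v_{\sigma(1)},\dots,v_{\sigma(k-1)},\rho^R(g_1(v_{\sigma(k)},\dots,v_{\sigma(k+m-1)}))v_{\sigma(k+m)},v_{k+m+1},\dots,v_{m+n})$. Here $T$ is regarded as an element of $C^1(V,\mathfrak{g})$. *)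

theory Defs
  imports Complex_Main "HOL-Combinatorics.Permutations"
begin

text \<open>Vectors v_1,...,v_N are given as a list vs; argument i (1-indexed) is vs ! (i - 1).\<close>

definition arg :: "'v list \<Rightarrow> nat \<Rightarrow> 'v" where
  "arg vs i = vs ! (i - 1)"

definition same_block :: "nat list \<Rightarrow> nat \<Rightarrow> nat \<Rightarrow> bool" where
  "same_block bs a b \<longleftrightarrow> (\<exists>j < length bs. sum_list (take j bs) < a \<and> a \<le> sum_list (take (Suc j) bs)
      \<and> sum_list (take j bs) < b \<and> b \<le> sum_list (take (Suc j) bs))"

text \<open>(i_1,...,i_k)-shuffles: permutations of {1..N}, N = i_1+...+i_k, increasing on each block.\<close>
definition shuffles :: "nat list \<Rightarrow> (nat \<Rightarrow> nat) set" where
  "shuffles bs = {\<sigma>. \<sigma> permutes {1..sum_list bs} \<and>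
      (\<forall>a b. 1 \<le> a \<longrightarrow> a < b \<longrightarrow> b \<le> sum_list bs \<longrightarrow> same_block bs a b \<longrightarrow> \<sigma> a < \<sigma> b)}"

definition multilinear ::
  "('k::field \<Rightarrow> 'v::ab_group_add \<Rightarrow> 'v) \<Rightarrow> ('k \<Rightarrow> 'g::ab_group_add \<Rightarrow> 'g) \<Rightarrow> nat \<Rightarrow> ('v list \<Rightarrow> 'g) \<Rightarrow> bool" where
  "multilinear sV sG n f \<longleftrightarrow>
     (\<forall>xs i. length xs = n \<longrightarrow> i < n \<longrightarrow> Vector_Spaces.linear sV sG (\<lambda>v. f (xs[i := v])))"

definition is_leibniz_algebra :: "('k::field \<Rightarrow> 'g::ab_group_add \<Rightarrow> 'g) \<Rightarrow> ('g \<Rightarrow> 'g \<Rightarrow> 'g) \<Rightarrow> bool" where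
  "is_leibniz_algebra sG br \<longleftrightarrow> vector_space sG \<and>
     (\<forall>x. Vector_Spaces.linear sG sG (br x)) \<and> (\<forall>y. Vector_Spaces.linear sG sG (\<lambda>x. br x y)) \<and>
     (\<forall>x y z. br x (br y z) = br (br x y) z + br y (br x z))"

definition is_representation ::
  "('k::field \<Rightarrow> 'g::ab_group_add \<Rightarrow> 'g) \<Rightarrow> ('g \<Rightarrow> 'g \<Rightarrow> 'g) \<Rightarrow> ('k \<Rightarrow> 'v::ab_group_add \<Rightarrow> 'v)
    \<Rightarrow> ('g \<Rightarrow> 'v \<Rightarrow> 'v) \<Rightarrow> ('g \<Rightarrow> 'v \<Rightarrow> 'v) \<Rightarrow> bool" where
  "is_representation sG br sV rhoL rhoR \<longleftrightarrow> vector_space sV \<and>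
     (\<forall>x. Vector_Spaces.linear sV sV (rhoL x)) \<and> (\<forall>x. Vector_Spaces.linear sV sV (rhoR x)) \<and>
     (\<forall>v. Vector_Spaces.linear sG sV (\<lambda>x. rhoL x v)) \<and> (\<forall>v. Vector_Spaces.linear sG sV (\<lambda>x. rhoR x v)) \<and>
     (\<forall>x y. rhoL (br x y) = rhoL x \<circ> rhoL y - rhoL y \<circ> rhoL x) \<and>
     (\<forall>x y. rhoR (br x y) = rhoL x \<circ> rhoR y - rhoR y \<circ> rhoL x) \<and>
     (\<forall>x y. rhoR y \<circ> rhoL x = - (rhoR y \<circ> rhoR x))"

definition is_relative_RB ::
  "('k::field \<Rightarrow> 'g::ab_group_add \<Rightarrow> 'g) \<Rightarrow> ('g \<Rightarrow> 'g \<Rightarrow> 'g) \<Rightarrow> ('k \<Rightarrow> 'v::ab_group_add \<Rightarrow> 'v)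
    \<Rightarrow> ('g \<Rightarrow> 'v \<Rightarrow> 'v) \<Rightarrow> ('g \<Rightarrow> 'v \<Rightarrow> 'v) \<Rightarrow> ('v \<Rightarrow> 'g) \<Rightarrow> bool" where
  "is_relative_RB sG br sV rhoL rhoR T \<longleftrightarrow> Vector_Spaces.linear sV sG T \<and>
     (\<forall>v1 v2. br (T v1) (T v2) = T (rhoL (T v1) v2 + rhoR (T v2) v1))"

definition coboundary ::
  "('k::field \<Rightarrow> 'g::ab_group_add \<Rightarrow> 'g) \<Rightarrow> ('g \<Rightarrow> 'g \<Rightarrow> 'g)
    \<Rightarrow> ('g \<Rightarrow> 'v::ab_group_add \<Rightarrow> 'v) \<Rightarrow> ('g \<Rightarrow> 'v \<Rightarrow> 'v) \<Rightarrow> ('v \<Rightarrow> 'g)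
    \<Rightarrow> nat \<Rightarrow> ('v list \<Rightarrow> 'g) \<Rightarrow> 'v list \<Rightarrow> 'g" where
  "coboundary sG br rhoL rhoR T n f vs =
     (let w = arg vs; s = (\<lambda>e::int. sG (of_int e)) in
       (\<Sum>i\<in>{1..n}. s ((-1)^(i+1)) (br (T (w i)) (f (map w ([1..<i] @ [i+1..<n+2])))))
     - (\<Sum>i\<in>{1..n}. s ((-1)^(i+1)) (T (rhoR (f (map w ([1..<i] @ [i+1..<n+2]))) (w i))))
     + s ((-1)^(n+1)) (br (f (map w [1..<n+1])) (T (w (n+1))))
     + s ((-1)^n) (T (rhoL (f (map w [1..<n+1])) (w (n+1))))
     + (\<Sum>(i,j)\<in>{(i,j). 1 \<le> i \<and> i < j \<and> j \<le> n+1}.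
          s ((-1)^i) (f (map w ([1..<i] @ [i+1..<j]) @ [rhoL (T (w i)) (w j) + rhoR (T (w j)) (w i)]
                         @ map w [j+1..<n+2]))))"

definition cobracket ::
  "('k::field \<Rightarrow> 'g::ab_group_add \<Rightarrow> 'g) \<Rightarrow> ('g \<Rightarrow> 'g \<Rightarrow> 'g)
    \<Rightarrow> ('g \<Rightarrow> 'v::ab_group_add \<Rightarrow> 'v) \<Rightarrow> ('g \<Rightarrow> 'v \<Rightarrow> 'v)
    \<Rightarrow> nat \<Rightarrow> ('v list \<Rightarrow> 'g) \<Rightarrow> nat \<Rightarrow> ('v list \<Rightarrow> 'g) \<Rightarrow> 'v list \<Rightarrow> 'g" where
  "cobracket sG br rhoL rhoR m g1 n g2 vs =
     (let w = arg vs; s = (\<lambda>e::int. sG (of_int e)) in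
       (\<Sum>k\<in>{1..m}. \<Sum>\<sigma>\<in>shuffles [k-1, n].
          s ((-1)^((k-1)*n+1) * sign \<sigma>)
            (g1 (map (w \<circ> \<sigma>) [1..<k] @ [rhoL (g2 (map (w \<circ> \<sigma>) [k..<k+n])) (w (k+n))]
                 @ map w [k+n+1..<m+n+1])))
     + (\<Sum>k\<in>{2..m+1}. \<Sum>\<sigma>\<in>{\<sigma>\<in>shuffles [k-2, n, 1]. \<sigma> (k+n-2) = k+n-1}.
          s ((-1)^(k*n) * sign \<sigma>)
            (g1 (map (w \<circ> \<sigma>) [1..<k-1] @ [rhoR (g2 (map (w \<circ> \<sigma>) [k-1..<k+n-1])) (w (\<sigma> (k+n-1)))]
                 @ map w [k+n..<m+n+1])))
     + (\<Sum>k\<in>{1..m}. \<Sum>\<sigma>\<in>shuffles [k-1, n-1].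
          s ((-1)^((k-1)*n) * sign \<sigma>)
            (br (g2 (map (w \<circ> \<sigma>) [k..<k+n-1] @ [w (k+n-1)]))
                (g1 (map (w \<circ> \<sigma>) [1..<k] @ map w [k+n..<m+n+1]))))
     + (\<Sum>\<sigma>\<in>shuffles [m, n-1].
          s ((-1)^(m*n+1) * sign \<sigma>)
            (br (g1 (map (w \<circ> \<sigma>) [1..<m+1]))
                (g2 (map (w \<circ> \<sigma>) [m+1..<m+n] @ [w (m+n)]))))
     + (\<Sum>k\<in>{1..n}. \<Sum>\<sigma>\<in>shuffles [k-1, m].
          s ((-1)^(m*(k+n-1)) * sign \<sigma>)
            (g2 (map (w \<circ> \<sigma>) [1..<k] @ [rhoL (g1 (map (w \<circ> \<sigma>) [k..<k+m])) (w (k+m))]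
                 @ map w [k+m+1..<m+n+1])))
     + (\<Sum>k\<in>{1..n}. \<Sum>\<sigma>\<in>{\<sigma>\<in>shuffles [k-1, m, 1]. \<sigma> (k+m-1) = k+m}.
          s ((-1)^(m*(k+n-1)+1) * sign \<sigma>)
            (g2 (map (w \<circ> \<sigma>) [1..<k] @ [rhoR (g1 (map (w \<circ> \<sigma>) [k..<k+m])) (w (\<sigma> (k+m)))]
                 @ map w [k+m+1..<m+n+1]))))"

end

theory Submission
  imports Defs
begin

(* For m = 1 and g1 = T every shuffle sum in the bracket {T, f} runs over an explicitly known
   family: the (0, N)-shuffles are trivial, and a shuffle with a one-element block is determined
   by the entry that block receives, so it is the cycle carrying v_i to the last (or first)
   position, of sign (-1)^(k - i). Reindexing by i turns (-1)^(n-1) {T, f} into sums matching the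
   terms of d_T f one by one; the last sum of d_T f, over pairs i < j, splits into the rho^L and
   rho^R sums of the bracket because f is additive in each argument. *)

lemma strict_mono_on_add_diff_le:
  fixes \<sigma> :: "nat \<Rightarrow> nat"
  assumes "strict_mono_on {a..b} \<sigma>" "a \<le> p" "p \<le> q" "q \<le> b"
  shows "\<sigma> p + (q - p) \<le> \<sigma> q"
  using assms(3,4)
proof (induction q rule: dec_induct)
  case (step q)
  then have "\<sigma> q < \<sigma> (Suc q)"
    using assms(1,2) by (auto intro: strict_mono_onD)
  with step show ?case by simp
qed simp

lemma strict_mono_on_skipping_value:
  fixes \<sigma> :: "nat \<Rightarrow> nat"
  assumes mono: "strict_mono_on {a..b} \<sigma>"
    and range: "\<sigma> ` {a..b} \<subseteq> {c..d} - {h}" and h: "h \<in> {c..d}"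
    and width: "a + d = b + c + 1" and p: "p \<in> {a..b}"
  shows "\<sigma> p = (if c + (p - a) < h then c + (p - a) else c + (p - a) + 1)"
proof -
  have bounds: "\<sigma> q \<in> {c..d}" if "q \<in> {a..b}" for q
    using range that by blast
  have lower: "c + (q - a) \<le> \<sigma> q" if "q \<in> {a..b}" for q
    using strict_mono_on_add_diff_le[OF mono, of a q] bounds[of a] that by auto
  have upper: "\<sigma> q \<le> c + (q - a) + 1" if "q \<in> {a..b}" for q
    using strict_mono_on_add_diff_le[OF mono, of q b] bounds[of b] that width by auto
  have skip: "\<sigma> q \<noteq> h" if "q \<in> {a..b}" for q
    using range that by blast
  show ?thesis
  proof (cases "c + (p - a) < h")
    case True
    define q where "q = a + (h - c - 1)"
    have "q \<in> {a..b}" "p \<le> q" using True h p width unfolding q_def by auto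
    then have "\<sigma> p + (q - p) \<le> \<sigma> q" "\<sigma> q \<le> h"
      using strict_mono_on_add_diff_le[OF mono, of p q] upper[of q] p True h
      unfolding q_def by auto
    moreover have "\<sigma> q \<noteq> h" using skip \<open>q \<in> {a..b}\<close> by blast
    ultimately show ?thesis using True lower[OF p] \<open>p \<le> q\<close> h unfolding q_def by auto
  next
    case False
    define q where "q = a + (h - c)"
    have "q \<in> {a..b}" "q \<le> p" using False h p width unfolding q_def by auto
    then have "\<sigma> q + (p - q) \<le> \<sigma> p" "h \<le> \<sigma> q"
      using strict_mono_on_add_diff_le[OF mono, of q p] lower[of q] p False h
      unfolding q_def by auto
    moreover have "\<sigma> q \<noteq> h" using skip \<open>q \<in> {a..b}\<close> by blast
    ultimately show ?thesis using False upper[OF p] \<open>q \<le> p\<close> h unfolding q_def by auto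
  qed
qed

lemma multilinear_add_at:
  assumes "multilinear sV sG n f" and "length xs + length ys + 1 = n"
  shows "f (xs @ (a + b) # ys) = f (xs @ a # ys) + f (xs @ b # ys)"
proof -
  have "length (xs @ a # ys) = n" and "length xs < n" using assms(2) by auto
  then have "Vector_Spaces.linear sV sG (\<lambda>v. f ((xs @ a # ys)[length xs := v]))"
    using assms(1) unfolding multilinear_def by blast
  then show ?thesis unfolding Vector_Spaces.linear_iff by (simp add: list_update_append)
qed

lemma sum_ordered_pairs_eq_nested:
  fixes n :: nat
  shows "(\<Sum>(i, j)\<in>{(i, j). 1 \<le> i \<and> i < j \<and> j \<le> n + 1}. g i j) = (\<Sum>k = 1..n. \<Sum>i = 1..k. g i (k + 1))"
proof -
  have "(\<Sum>k = 1..n. \<Sum>i = 1..k. g i (k + 1)) = (\<Sum>(k, i)\<in>Sigma {1..n} (\<lambda>k. {1..k}). g i (k + 1))"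
    by (rule sum.Sigma) auto
  also have "\<dots> = (\<Sum>(i, j)\<in>{(i, j). 1 \<le> i \<and> i < j \<and> j \<le> n + 1}. g i j)"
    by (rule sum.reindex_bij_witness[where j = "\<lambda>(k, i). (i, k + 1)" and i = "\<lambda>(i, j). (j - 1, i)"])
      auto
  finally show ?thesis ..
qed

lemma sum_pairs_multilinear_add_at:
  assumes "vector_space sG" and "multilinear sV sG n f"
    and "\<forall>(i, j)\<in>A. length (p i j) + length (q i j) + 1 = n"
  shows "(\<Sum>(i, j)\<in>A. sG (c i j) (f (p i j @ [a i j + b i j] @ q i j)))
    = (\<Sum>(i, j)\<in>A. sG (c i j) (f (p i j @ [a i j] @ q i j)))
    + (\<Sum>(i, j)\<in>A. sG (c i j) (f (p i j @ [b i j] @ q i j)))"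
proof -
  interpret G: vector_space sG by fact
  have "f (p i j @ [a i j + b i j] @ q i j) = f (p i j @ [a i j] @ q i j) + f (p i j @ [b i j] @ q i j)"
    if "(i, j) \<in> A" for i j
    using multilinear_add_at[OF assms(2)] assms(3) that by auto
  then show ?thesis
    unfolding sum.distrib[symmetric] by (intro sum.cong) (auto simp: G.scale_right_distrib)
qed

section \<open>Cycles moving one entry to the back or to the front\<close>

(* Read through map (w \<circ> \<sigma>): move_to_back i k lists v_1, ..., v_(i-1), v_(i+1), ..., v_k, v_i and
   move_to_front i lists v_i, v_1, ..., v_(i-1), v_(i+1), .... *)
definition move_to_back :: "nat \<Rightarrow> nat \<Rightarrow> nat \<Rightarrow> nat" where
  "move_to_back i k p = (if p = k then i else if i \<le> p \<and> p < k then Suc p else p)"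

definition move_to_front :: "nat \<Rightarrow> nat \<Rightarrow> nat" where
  "move_to_front i p = (if p = 1 then i else if 2 \<le> p \<and> p \<le> i then p - 1 else p)"

lemma move_to_back_last [simp]: "move_to_back i k k = i"
  by (simp add: move_to_back_def)

lemma move_to_front_first [simp]: "move_to_front i (Suc 0) = i"
  by (simp add: move_to_front_def)

lemma move_to_back_Suc:
  "i \<le> k \<Longrightarrow> move_to_back i (Suc k) = move_to_back i k \<circ> transpose k (Suc k)"
  by (rule ext) (auto simp: move_to_back_def transpose_def)

lemma move_to_front_Suc:
  "1 \<le> i \<Longrightarrow> move_to_front (Suc i) = transpose i (Suc i) \<circ> move_to_front i"
  by (rule ext) (auto simp: move_to_front_def transpose_def)

lemma move_to_back_permutes: "i \<le> k \<Longrightarrow> move_to_back i k permutes {i..k}"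
proof (induction k rule: dec_induct)
  case base
  have "move_to_back i i = id" by (rule ext) (simp add: move_to_back_def)
  then show ?case by (simp only: permutes_id)
next
  case (step m)
  have "move_to_back i m \<circ> transpose m (Suc m) permutes {i..Suc m}"
    using step by (intro permutes_compose permutes_swap_id permutes_subset[OF step.IH]) auto
  then show ?case by (simp only: move_to_back_Suc[OF step.hyps(1)])
qed

lemma sign_move_to_back: "i \<le> k \<Longrightarrow> sign (move_to_back i k) = (-1) ^ (k - i)"
proof (induction k rule: dec_induct)
  case base
  have "move_to_back i i = id" by (rule ext) (simp add: move_to_back_def)
  then show ?case by (simp add: sign_id)
next
  case (step m)
  have "permutation (move_to_back i m)"
    using move_to_back_permutes[OF step.hyps(1)] by (rule permutes_imp_permutation[OF finite_atLeastAtMost])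
  then have "sign (move_to_back i (Suc m)) = - sign (move_to_back i m)"
    by (simp only: move_to_back_Suc[OF step.hyps(1)] sign_compose permutation_swap_id sign_swap_id) simp
  then show ?case using step by (simp add: Suc_diff_le)
qed

lemma move_to_front_permutes: "1 \<le> i \<Longrightarrow> move_to_front i permutes {1..i}"
proof (induction i rule: dec_induct)
  case base
  have "move_to_front 1 = id" by (rule ext) (simp add: move_to_front_def)
  then show ?case by (simp only: permutes_id)
next
  case (step m)
  have "transpose m (Suc m) \<circ> move_to_front m permutes {1..Suc m}"
    using step by (intro permutes_compose permutes_swap_id permutes_subset[OF step.IH]) auto
  then show ?case by (simp only: move_to_front_Suc[OF step.hyps(1)])
qed

lemma sign_move_to_front: "1 \<le> i \<Longrightarrow> sign (move_to_front i) = (-1) ^ (i - 1)"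
proof (induction i rule: dec_induct)
  case base
  have "move_to_front 1 = id" by (rule ext) (simp add: move_to_front_def)
  then show ?case by (simp add: sign_id)
next
  case (step m)
  have "permutation (move_to_front m)"
    using move_to_front_permutes[OF step.hyps(1)] by (rule permutes_imp_permutation[OF finite_atLeastAtMost])
  then have "sign (move_to_front (Suc m)) = - sign (move_to_front m)"
    by (simp only: move_to_front_Suc[OF step.hyps(1)] sign_compose permutation_swap_id sign_swap_id) simp
  then show ?case using step by (cases m) simp_all
qed

lemma inj_move_to_back: "inj (\<lambda>i. move_to_back i k)"
  by (rule injI) (metis move_to_back_last)

lemma inj_move_to_front: "inj move_to_front"
  by (rule injI) (metis move_to_front_first)

lemma map_move_to_back:
  assumes "1 \<le> i" "i \<le> k" "k \<le> K"
  shows "map (w \<circ> move_to_back i K) [1..<k] = map w ([1..<i] @ [i + 1..<k + 1])"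
proof -
  have "[1..<k] = [1..<i] @ [i..<k]" using upt_add_eq_append[of 1 i "k - i"] assms by simp
  moreover have "map (w \<circ> move_to_back i K) [1..<i] = map w [1..<i]"
    using assms by (auto simp: move_to_back_def)
  moreover have "map (w \<circ> move_to_back i K) [i..<k] = map (w \<circ> Suc) [i..<k]"
    using assms by (auto simp: move_to_back_def)
  ultimately show ?thesis by (simp del: upt_Suc flip: map_Suc_upt)
qed

lemma map_move_to_front:
  assumes "1 \<le> i" "i \<le> n"
  shows "map (w \<circ> move_to_front i) [2..<n + 1] = map w ([1..<i] @ [i + 1..<n + 1])"
proof -
  have "[2..<n + 1] = map Suc [1..<i] @ [i + 1..<n + 1]"
    using upt_add_eq_append[of 2 "i + 1" "n - i"] assms by (simp add: map_Suc_upt numeral_2_eq_2)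
  moreover have "map (w \<circ> move_to_front i \<circ> Suc) [1..<i] = map w [1..<i]"
    using assms by (auto simp: move_to_front_def)
  moreover have "map (w \<circ> move_to_front i) [i + 1..<n + 1] = map w [i + 1..<n + 1]"
    using assms by (auto simp: move_to_front_def)
  ultimately show ?thesis by (simp del: upt_Suc)
qed

section \<open>Shuffles with a one-element block\<close>

lemma same_block_Nil: "\<not> same_block [] x y"
  by (simp add: same_block_def)

lemma same_block_Cons:
  "same_block (b # bs) x y \<longleftrightarrow>
     (0 < x \<and> x \<le> b \<and> 0 < y \<and> y \<le> b) \<or> (b < x \<and> b < y \<and> same_block bs (x - b) (y - b))"
  unfolding same_block_def by (auto simp: Ex_less_Suc2 less_diff_conv2 le_diff_conv add.commute)

lemma shuffles_two_blocks:
  "\<sigma> \<in> shuffles [a, b] \<longleftrightarrow>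
     \<sigma> permutes {1..a + b} \<and> strict_mono_on {1..a} \<sigma> \<and> strict_mono_on {a + 1..a + b} \<sigma>"
proof -
  have "same_block [a, b] x y \<longleftrightarrow>
      (0 < x \<and> x \<le> a \<and> 0 < y \<and> y \<le> a) \<or> (a < x \<and> x \<le> a + b \<and> a < y \<and> y \<le> a + b)" for x y
    by (auto simp: same_block_Cons same_block_Nil)
  then show ?thesis unfolding shuffles_def strict_mono_on_def by auto
qed

lemma shuffles_three_blocks:
  "\<sigma> \<in> shuffles [a, b, c] \<longleftrightarrow>
     \<sigma> permutes {1..a + b + c} \<and> strict_mono_on {1..a} \<sigma> \<and> strict_mono_on {a + 1..a + b} \<sigma>
       \<and> strict_mono_on {a + b + 1..a + b + c} \<sigma>"
proof -
  have "same_block [a, b, c] x y \<longleftrightarrow>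
      (0 < x \<and> x \<le> a \<and> 0 < y \<and> y \<le> a) \<or> (a < x \<and> x \<le> a + b \<and> a < y \<and> y \<le> a + b)
      \<or> (a + b < x \<and> x \<le> a + b + c \<and> a + b < y \<and> y \<le> a + b + c)" for x y
    by (auto simp: same_block_Cons same_block_Nil)
  then show ?thesis unfolding shuffles_def strict_mono_on_def by (auto simp: add.assoc)
qed

lemma permutes_strict_mono_on_eq_id:
  fixes \<sigma> :: "nat \<Rightarrow> nat"
  assumes perm: "\<sigma> permutes {1..N}" and mono: "strict_mono_on {1..N} \<sigma>"
  shows "\<sigma> = id"
proof
  fix p
  show "\<sigma> p = id p"
  proof (cases "p \<in> {1..N}")
    case True
    have "\<sigma> ` {1..N} \<subseteq> {1..N + 1} - {N + 1}"
      using permutes_image[OF perm] by auto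
    then show ?thesis
      using strict_mono_on_skipping_value[OF mono, where c=1 and d="N + 1" and h="N + 1"] True by auto
  qed (use permutes_not_in[OF perm] in auto)
qed

lemma permutes_strict_mono_on_eq_move_to_back:
  fixes \<sigma> :: "nat \<Rightarrow> nat"
  assumes perm: "\<sigma> permutes {1..k}" and mono: "strict_mono_on {1..k - 1} \<sigma>" and "1 \<le> k"
  shows "\<sigma> = move_to_back (\<sigma> k) k"
proof
  fix p
  have last: "\<sigma> k \<in> {1..k}" using permutes_in_image[OF perm] \<open>1 \<le> k\<close> by auto
  show "\<sigma> p = move_to_back (\<sigma> k) k p"
  proof (cases "p \<in> {1..k - 1}")
    case True
    have "\<sigma> ` {1..k - 1} \<subseteq> \<sigma> ` {1..k} - {\<sigma> k}"
      using permutes_inj[OF perm] by (auto simp: inj_eq)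
    then have "\<sigma> ` {1..k - 1} \<subseteq> {1..k} - {\<sigma> k}"
      unfolding permutes_image[OF perm] .
    then show ?thesis
      using strict_mono_on_skipping_value[OF mono _ last _ True] True \<open>1 \<le> k\<close>
      by (auto simp: move_to_back_def)
  qed (use permutes_not_in[OF perm] last in \<open>auto simp: move_to_back_def\<close>)
qed

lemma permutes_strict_mono_on_eq_move_to_front:
  fixes \<sigma> :: "nat \<Rightarrow> nat"
  assumes perm: "\<sigma> permutes {1..n}" and mono: "strict_mono_on {2..n} \<sigma>" and "1 \<le> n"
  shows "\<sigma> = move_to_front (\<sigma> 1)"
proof
  fix p
  have first: "\<sigma> 1 \<in> {1..n}" using permutes_in_image[OF perm] \<open>1 \<le> n\<close> by auto
  show "\<sigma> p = move_to_front (\<sigma> 1) p"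
  proof (cases "p \<in> {2..n}")
    case True
    have "\<sigma> ` {2..n} \<subseteq> \<sigma> ` {1..n} - {\<sigma> 1}"
      using permutes_inj[OF perm] by (auto simp: inj_eq)
    then have "\<sigma> ` {2..n} \<subseteq> {1..n} - {\<sigma> 1}"
      unfolding permutes_image[OF perm] .
    then show ?thesis
      using strict_mono_on_skipping_value[OF mono _ first _ True] True
      by (auto simp: move_to_front_def)
  qed (use permutes_not_in[OF perm] first in \<open>auto simp: move_to_front_def\<close>)
qed

lemma shuffles_empty_first: "shuffles [0, N] = {id}"
  using permutes_strict_mono_on_eq_id by (auto simp: shuffles_two_blocks permutes_id strict_mono_on_id)

lemma shuffles_singleton_last:
  assumes "1 \<le> k"
  shows "shuffles [k - 1, 1] = (\<lambda>i. move_to_back i k) ` {1..k}"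
proof (intro equalityI subsetI)
  fix \<sigma> assume "\<sigma> \<in> shuffles [k - 1, 1]"
  then have "\<sigma> permutes {1..k}" "strict_mono_on {1..k - 1} \<sigma>"
    using assms by (auto simp: shuffles_two_blocks)
  then show "\<sigma> \<in> (\<lambda>i. move_to_back i k) ` {1..k}"
    using permutes_strict_mono_on_eq_move_to_back assms permutes_in_image by fastforce
next
  fix \<sigma> assume "\<sigma> \<in> (\<lambda>i. move_to_back i k) ` {1..k}"
  then obtain i where "i \<in> {1..k}" "\<sigma> = move_to_back i k" by auto
  moreover have "move_to_back i k permutes {1..k}" if "i \<in> {1..k}" for i
    by (rule permutes_subset[OF move_to_back_permutes]) (use that in auto)
  ultimately show "\<sigma> \<in> shuffles [k - 1, 1]"
    using assms by (auto simp: shuffles_two_blocks strict_mono_on_def move_to_back_def)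
qed

lemma shuffles_singleton_first:
  assumes "1 \<le> n"
  shows "shuffles [1, n - 1] = move_to_front ` {1..n}"
proof (intro equalityI subsetI)
  fix \<sigma> assume "\<sigma> \<in> shuffles [1, n - 1]"
  then have "\<sigma> permutes {1..n}" "strict_mono_on {2..n} \<sigma>"
    using assms by (auto simp: shuffles_two_blocks numeral_2_eq_2)
  then show "\<sigma> \<in> move_to_front ` {1..n}"
    using permutes_strict_mono_on_eq_move_to_front assms permutes_in_image by fastforce
next
  fix \<sigma> assume "\<sigma> \<in> move_to_front ` {1..n}"
  then obtain i where "i \<in> {1..n}" "\<sigma> = move_to_front i" by auto
  moreover have "move_to_front i permutes {1..n}" if "i \<in> {1..n}" for i
    by (rule permutes_subset[OF move_to_front_permutes]) (use that in auto)
  ultimately show "\<sigma> \<in> shuffles [1, n - 1]"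
    using assms by (auto simp: shuffles_two_blocks strict_mono_on_def move_to_front_def)
qed

lemma move_to_back_image_eq:
  assumes "1 \<le> k"
  shows "(\<lambda>i. move_to_back i (k + 1)) ` {1..k} =
    {\<sigma>. \<sigma> permutes {1..k + 1} \<and> strict_mono_on {1..k} \<sigma> \<and> \<sigma> k = k + 1}"
proof (intro equalityI subsetI)
  fix \<sigma> assume "\<sigma> \<in> (\<lambda>i. move_to_back i (k + 1)) ` {1..k}"
  then obtain i where "i \<in> {1..k}" "\<sigma> = move_to_back i (k + 1)" by auto
  moreover have "move_to_back i (k + 1) permutes {1..k + 1}" if "i \<in> {1..k}" for i
    by (rule permutes_subset[OF move_to_back_permutes]) (use that in auto)
  ultimately show "\<sigma> \<in> {\<sigma>. \<sigma> permutes {1..k + 1} \<and> strict_mono_on {1..k} \<sigma> \<and> \<sigma> k = k + 1}"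
    by (auto simp: strict_mono_on_def move_to_back_def)
next
  fix \<sigma> assume "\<sigma> \<in> {\<sigma>. \<sigma> permutes {1..k + 1} \<and> strict_mono_on {1..k} \<sigma> \<and> \<sigma> k = k + 1}"
  then have perm: "\<sigma> permutes {1..k + 1}" and "strict_mono_on {1..k} \<sigma>" and "\<sigma> k = k + 1"
    by auto
  then have "\<sigma> = move_to_back (\<sigma> (k + 1)) (k + 1)"
    using permutes_strict_mono_on_eq_move_to_back[OF perm] by simp
  moreover have "\<sigma> (k + 1) \<noteq> \<sigma> k"
    using permutes_inj[OF perm] by (auto simp: inj_eq)
  then have "\<sigma> (k + 1) \<in> {1..k}"
    using permutes_in_image[OF perm, of "k + 1"] \<open>\<sigma> k = k + 1\<close> by auto
  ultimately show "\<sigma> \<in> (\<lambda>i. move_to_back i (k + 1)) ` {1..k}" by (metis image_eqI)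
qed

lemma shuffles_block_singleton_last:
  assumes "1 \<le> k"
  shows "{\<sigma> \<in> shuffles [0, k, 1]. \<sigma> k = k + 1} = (\<lambda>i. move_to_back i (k + 1)) ` {1..k}"
  unfolding move_to_back_image_eq[OF assms] by (auto simp: shuffles_three_blocks strict_mono_on_def)

lemma shuffles_two_singletons_last:
  assumes "1 \<le> k"
  shows "{\<sigma> \<in> shuffles [k - 1, 1, 1]. \<sigma> k = k + 1} = (\<lambda>i. move_to_back i (k + 1)) ` {1..k}"
  unfolding move_to_back_image_eq[OF assms]
proof (intro equalityI subsetI)
  fix \<sigma> assume "\<sigma> \<in> {\<sigma> \<in> shuffles [k - 1, 1, 1]. \<sigma> k = k + 1}"
  then have perm: "\<sigma> permutes {1..k + 1}" and mono: "strict_mono_on {1..k - 1} \<sigma>"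
    and last: "\<sigma> k = k + 1"
    using assms by (auto simp: shuffles_three_blocks)
  have below_last: "\<sigma> p < \<sigma> k" if "p \<in> {1..k - 1}" for p
  proof -
    have "\<sigma> p \<noteq> \<sigma> k" using permutes_inj[OF perm] that by (auto simp: inj_eq)
    then show ?thesis using permutes_in_image[OF perm, of p] last that by auto
  qed
  have "strict_mono_on {1..k} \<sigma>"
  proof (intro strict_mono_onI)
    fix r s assume "r \<in> {1..k}" "s \<in> {1..k}" "r < s"
    moreover have "s \<le> k - 1 \<or> s = k" using \<open>s \<in> {1..k}\<close> by auto
    ultimately show "\<sigma> r < \<sigma> s"
      using mono below_last[of r] by (auto intro: strict_mono_onD)
  qed
  with perm last show "\<sigma> \<in> {\<sigma>. \<sigma> permutes {1..k + 1} \<and> strict_mono_on {1..k} \<sigma> \<and> \<sigma> k = k + 1}"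
    by blast
next
  fix \<sigma> assume "\<sigma> \<in> {\<sigma>. \<sigma> permutes {1..k + 1} \<and> strict_mono_on {1..k} \<sigma> \<and> \<sigma> k = k + 1}"
  then have "strict_mono_on {1..k} \<sigma>" by blast
  then have "strict_mono_on {1..k - 1} \<sigma>"
    by (rule monotone_on_subset) auto
  with \<open>\<sigma> \<in> {\<sigma>. \<sigma> permutes {1..k + 1} \<and> strict_mono_on {1..k} \<sigma> \<and> \<sigma> k = k + 1}\<close>
  show "\<sigma> \<in> {\<sigma> \<in> shuffles [k - 1, 1, 1]. \<sigma> k = k + 1}"
    using assms by (auto simp: shuffles_three_blocks strict_mono_on_def)
qed

lemma sum_shuffles_singleton_last:
  assumes "1 \<le> k"
  shows "(\<Sum>\<sigma>\<in>shuffles [k - 1, 1]. F \<sigma>) = (\<Sum>i = 1..k. F (move_to_back i k))"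
  unfolding shuffles_singleton_last[OF assms]
  by (simp add: sum.reindex inj_on_subset[OF inj_move_to_back])

lemma sum_shuffles_singleton_first:
  assumes "1 \<le> n"
  shows "(\<Sum>\<sigma>\<in>shuffles [1, n - 1]. F \<sigma>) = (\<Sum>i = 1..n. F (move_to_front i))"
  unfolding shuffles_singleton_first[OF assms]
  by (simp add: sum.reindex inj_on_subset[OF inj_move_to_front])

lemma sum_shuffles_block_singleton_last:
  assumes "1 \<le> k"
  shows "(\<Sum>\<sigma>\<in>{\<sigma> \<in> shuffles [0, k, 1]. \<sigma> k = k + 1}. F \<sigma>)
    = (\<Sum>i = 1..k. F (move_to_back i (k + 1)))"
  unfolding shuffles_block_singleton_last[OF assms]
  by (simp add: sum.reindex inj_on_subset[OF inj_move_to_back])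

lemma sum_shuffles_two_singletons_last:
  assumes "1 \<le> k"
  shows "(\<Sum>\<sigma>\<in>{\<sigma> \<in> shuffles [k - 1, 1, 1]. \<sigma> k = k + 1}. F \<sigma>)
    = (\<Sum>i = 1..k. F (move_to_back i (k + 1)))"
  unfolding shuffles_two_singletons_last[OF assms]
  by (simp add: sum.reindex inj_on_subset[OF inj_move_to_back])

lemma cobracket_T_left_unfold:
  assumes "1 \<le> n"
  shows "cobracket sG br rhoL rhoR 1 (\<lambda>xs. T (hd xs)) n f vs =
    (let w = arg vs; s = (\<lambda>e::int. sG (of_int e)) in
       (\<Sum>\<sigma>\<in>shuffles [0, n]. s (- sign \<sigma>) (T (rhoL (f (map (w \<circ> \<sigma>) [1..<n+1])) (w (n+1)))))
     + (\<Sum>\<sigma>\<in>{\<sigma> \<in> shuffles [0, n, 1]. \<sigma> n = n + 1}.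
          s (sign \<sigma>) (T (rhoR (f (map (w \<circ> \<sigma>) [1..<n+1])) (w (\<sigma> (n+1))))))
     + (\<Sum>\<sigma>\<in>shuffles [0, n - 1]. s (sign \<sigma>) (br (f (map (w \<circ> \<sigma>) [1..<n] @ [w n])) (T (w (n+1)))))
     + (\<Sum>\<sigma>\<in>shuffles [1, n - 1].
          s ((-1) ^ (n+1) * sign \<sigma>) (br (T (w (\<sigma> 1))) (f (map (w \<circ> \<sigma>) [2..<n+1] @ [w (n+1)]))))
     + (\<Sum>k\<in>{1..n}. \<Sum>\<sigma>\<in>shuffles [k - 1, 1].
          s ((-1) ^ (k+n-1) * sign \<sigma>)
            (f (map (w \<circ> \<sigma>) [1..<k] @ rhoL (T (w (\<sigma> k))) (w (k+1)) # map w [k+2..<n+2])))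
     + (\<Sum>k\<in>{1..n}. \<Sum>\<sigma>\<in>{\<sigma> \<in> shuffles [k - 1, 1, 1]. \<sigma> k = k + 1}.
          s ((-1) ^ (k+n) * sign \<sigma>)
            (f (map (w \<circ> \<sigma>) [1..<k] @ rhoR (T (w (k+1))) (w (\<sigma> (k+1))) # map w [k+2..<n+2]))))"
  unfolding cobracket_def Let_def
  apply (intro arg_cong2[where f = "(+)"])
  subgoal by simp
  subgoal by simp
  subgoal using assms by simp
  subgoal by (simp add: numeral_2_eq_2)
  subgoal by (simp add: add.commute)
  subgoal by (simp add: add.commute)
  done

lemma cobracket_T_left_expansion:
  assumes "vector_space sG" and "1 \<le> n"
  shows "sG (of_int ((-1) ^ (n - 1))) (cobracket sG br rhoL rhoR 1 (\<lambda>xs. T (hd xs)) n f vs) =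
    (let w = arg vs; s = (\<lambda>e::int. sG (of_int e)) in
       s ((-1) ^ n) (T (rhoL (f (map w [1..<n+1])) (w (n+1))))
     + (\<Sum>i\<in>{1..n}. s ((-1) ^ i) (T (rhoR (f (map w ([1..<i] @ [i+1..<n+2]))) (w i))))
     + s ((-1) ^ (n+1)) (br (f (map w [1..<n+1])) (T (w (n+1))))
     + (\<Sum>i\<in>{1..n}. s ((-1) ^ (i+1)) (br (T (w i)) (f (map w ([1..<i] @ [i+1..<n+2])))))
     + (\<Sum>k\<in>{1..n}. \<Sum>i\<in>{1..k}.
          s ((-1) ^ i) (f (map w ([1..<i] @ [i+1..<k+1]) @ rhoL (T (w i)) (w (k+1)) # map w [k+2..<n+2])))
     + (\<Sum>k\<in>{1..n}. \<Sum>i\<in>{1..k}.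
          s ((-1) ^ i) (f (map w ([1..<i] @ [i+1..<k+1]) @ rhoR (T (w (k+1))) (w i) # map w [k+2..<n+2]))))"
proof -
  interpret G: vector_space sG by fact
  \<comment> \<open>The reindexing rules are passed [simplified] since the goal is in simp normal form
    (1 = Suc 0) by the time they are tried.\<close>
  show ?thesis
    unfolding cobracket_T_left_unfold[OF assms(2)] Let_def G.scale_right_distrib
    apply (intro arg_cong2[where f = "(+)"])
    subgoal using assms(2) by (simp add: shuffles_empty_first minus_one_power_iff)
    subgoal using assms(2)
      by (simp del: upt_Suc add: sum_shuffles_block_singleton_last[simplified] G.scale_sum_right
          G.scale_scale sign_move_to_back map_move_to_back[simplified])
        (intro sum.cong refl; simp add: minus_one_power_iff)
    subgoal using assms(2) by (simp add: shuffles_empty_first minus_one_power_iff)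
    subgoal using assms(2)
      by (simp del: upt_Suc add: sum_shuffles_singleton_first[simplified] G.scale_sum_right
          G.scale_scale sign_move_to_front map_move_to_front[simplified])
        (intro sum.cong refl; simp add: minus_one_power_iff)
    subgoal
      by (simp del: upt_Suc add: sum_shuffles_singleton_last[simplified] G.scale_sum_right
          G.scale_scale sign_move_to_back map_move_to_back[simplified])
        (intro sum.cong refl; simp add: minus_one_power_iff)
    subgoal
      by (simp del: upt_Suc add: sum_shuffles_two_singletons_last[simplified] G.scale_sum_right
          G.scale_scale sign_move_to_back map_move_to_back[simplified])
        (intro sum.cong refl; simp add: minus_one_power_iff)
    done
qed

theorem theorem2p10:
  fixes sG :: "'k::field \<Rightarrow> 'g::ab_group_add \<Rightarrow> 'g"
    and sV :: "'k \<Rightarrow> 'v::ab_group_add \<Rightarrow> 'v"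
    and br :: "'g \<Rightarrow> 'g \<Rightarrow> 'g"
    and rhoL rhoR :: "'g \<Rightarrow> 'v \<Rightarrow> 'v"
    and T :: "'v \<Rightarrow> 'g"
    and n :: nat and f :: "'v list \<Rightarrow> 'g" and vs :: "'v list"
  assumes "is_leibniz_algebra sG br"
    and "is_representation sG br sV rhoL rhoR"
    and "is_relative_RB sG br sV rhoL rhoR T"
    and "n \<ge> 1"
    and "multilinear sV sG n f"
    and "length vs = n + 1"
  shows "coboundary sG br rhoL rhoR T n f vs
         = sG (of_int ((-1)^(n-1))) (cobracket sG br rhoL rhoR 1 (\<lambda>xs. T (hd xs)) n f vs)"
proof -
  interpret G: vector_space sG
    using assms(1) unfolding is_leibniz_algebra_def by blast
  have lengths: "\<forall>(i, j)\<in>{(i, j). 1 \<le> i \<and> i < j \<and> j \<le> n + 1}.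
      length (map (arg vs) ([1..<i] @ [i+1..<j])) + length (map (arg vs) [j+1..<n+2]) + 1 = n"
    by auto
  show ?thesis
    unfolding coboundary_def cobracket_T_left_expansion[OF G.vector_space_axioms assms(4)] Let_def
      sum_pairs_multilinear_add_at[OF G.vector_space_axioms assms(5) lengths]
    unfolding sum_ordered_pairs_eq_nested
    by (simp add: sum_negf)
qed

end
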